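(* Let $K$ be a field, $n\ge3$, and $\boldsymbol{\lambda}=(\lambda_1,\dots,\lambda_n)$ a vector of positive integers with $\gcd(\lambda_1,\dots,\lambda_n)>n-2$. Then the monomial ideal $I(\boldsymbol{\lambda})\subseteq K[x_1,\dots,x_n]$ is normal.
   Context: $I(\boldsymbol{\lambda})$ is the integral closure in $K[x_1,\dots,x_n]$ of $(x_1^{\lambda_1},\dots,x_n^{\lambda_n})$. An ideal is normal if all its positive powers are integrally closed. *)

theory Defs
  imports Main "HOL-Library.Poly_Mapping" "HOL-Library.Cardinality"
begin

definition ideal_gen :: "'a::comm_ring_1 set \<Rightarrow> 'a set" where
  "ideal_gen S = {x. \<exists>F c. finite F \<and> F \<subseteq> S \<and> x = (\<Sum>s\<in>F. c s * s)}"

definition ideal_prod :: "'a::comm_ring_1 set \<Rightarrow> 'a set \<Rightarrow> 'a set" where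
  "ideal_prod I J = ideal_gen {a * b | a b. a \<in> I \<and> b \<in> J}"

fun ideal_pow :: "'a::comm_ring_1 set \<Rightarrow> nat \<Rightarrow> 'a set" where
  "ideal_pow I 0 = UNIV"
| "ideal_pow I (Suc k) = ideal_prod I (ideal_pow I k)"

definition integral_over_ideal :: "'a::comm_ring_1 set \<Rightarrow> 'a \<Rightarrow> bool" where
  "integral_over_ideal I x \<longleftrightarrow>
     (\<exists>m a. m \<ge> 1 \<and> (\<forall>i\<in>{1..m}. a i \<in> ideal_pow I i) \<and>
            x ^ m + (\<Sum>i=1..m. a i * x ^ (m - i)) = 0)"

definition integral_closure_ideal :: "'a::comm_ring_1 set \<Rightarrow> 'a set" where
  "integral_closure_ideal I = {x. integral_over_ideal I x}"

definition normal_ideal :: "'a::comm_ring_1 set \<Rightarrow> bool" where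
  "normal_ideal I \<longleftrightarrow>
     (\<forall>k\<ge>1. integral_closure_ideal (ideal_pow I k) = ideal_pow I k)"

text \<open>Polynomial ring K[x_i : i :: 'n] as finitely supported functions from
  monomials (finitely supported exponent vectors) to coefficients.\<close>
type_synonym ('n, 'k) mpoly = "('n \<Rightarrow>\<^sub>0 nat) \<Rightarrow>\<^sub>0 'k"

definition var :: "'n \<Rightarrow> ('n, 'k::comm_ring_1) mpoly" where
  "var i = Poly_Mapping.single (Poly_Mapping.single i 1) 1"

definition I_lambda :: "('n \<Rightarrow> nat) \<Rightarrow> ('n, 'k::field) mpoly set" where
  "I_lambda lam = integral_closure_ideal (ideal_gen (range (\<lambda>i. var i ^ lam i)))"

end

theory Submission
  imports Defs
begin

text \<open>Write \<open>\<lambda>\<^sub>i = d \<mu>\<^sub>i\<close> with \<open>d = gcd(\<lambda>)\<close> and give \<open>x\<^sub>i\<close> the weight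
  \<open>w\<^sub>i = M / \<mu>\<^sub>i\<close>, where \<open>M = \<Prod>\<^sub>i \<mu>\<^sub>i\<close>, so that every generator \<open>x\<^sub>i\<^bsup>\<lambda>\<^sub>i\<^esup>\<close> has the same
  weight \<open>T = d M\<close>. The monomial ideal \<open>W(t) = weight_ideal w t\<close> spanned by the monomials
  of weight \<open>\<ge> t\<close> is integrally closed, because the lowest term of \<open>x\<close> for a monomial order
  refining the weight gives \<open>x\<^sup>m\<close> a term that no other term of an equation of integral
  dependence can cancel. Hence the integral closure of \<open>I(\<lambda>)\<^sup>k\<close> lies in \<open>W(k T)\<close>.
  Conversely, a monomial of weight \<open>\<ge> T\<close> is integral over \<open>(x\<^sub>1\<^bsup>\<lambda>\<^sub>1\<^esup>, \<dots>, x\<^sub>n\<^bsup>\<lambda>\<^sub>n\<^esup>)\<close>,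
  and when \<open>d \<ge> n - 1\<close> every monomial of weight \<open>\<ge> 2 T\<close> splits off a factor of weight
  exactly \<open>T\<close>; by induction \<open>W(k T) \<subseteq> I(\<lambda>)\<^sup>k\<close>.\<close>

lemma ideal_gen_base: "s \<in> S \<Longrightarrow> s \<in> ideal_gen S"
  unfolding ideal_gen_def by (intro CollectI exI[of _ "{s}"] exI[of _ "\<lambda>_. 1"]) simp

lemma ideal_gen_zero: "0 \<in> ideal_gen S"
  unfolding ideal_gen_def by (intro CollectI exI[of _ "{}"]) simp

lemma ideal_gen_add:
  assumes "x \<in> ideal_gen S" "y \<in> ideal_gen S"
  shows "x + y \<in> ideal_gen S"
proof -
  obtain F c where F: "finite F" "F \<subseteq> S" "x = (\<Sum>s\<in>F. c s * s)"
    using assms(1) unfolding ideal_gen_def by blast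
  obtain G d where G: "finite G" "G \<subseteq> S" "y = (\<Sum>s\<in>G. d s * s)"
    using assms(2) unfolding ideal_gen_def by blast
  have extend: "(\<Sum>s\<in>A. e s * s) = (\<Sum>s\<in>F \<union> G. (if s \<in> A then e s else 0) * s)"
    if "A \<subseteq> F \<union> G" for A e
    by (rule sum.mono_neutral_cong_left) (use F G that in auto)
  define cd where "cd s = (if s \<in> F then c s else 0) + (if s \<in> G then d s else 0)" for s
  have "x + y = (\<Sum>s\<in>F \<union> G. cd s * s)"
    unfolding F(3) G(3) extend[of F, OF Un_upper1] extend[of G, OF Un_upper2] cd_def
    by (simp only: sum.distrib distrib_right)
  then show ?thesis
    using F G unfolding ideal_gen_def by (intro CollectI exI[of _ "F \<union> G"] exI[of _ cd]) simp
qed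

lemma ideal_gen_mult_left: "x \<in> ideal_gen S \<Longrightarrow> r * x \<in> ideal_gen S"
proof -
  assume "x \<in> ideal_gen S"
  then obtain F c where F: "finite F" "F \<subseteq> S" "x = (\<Sum>s\<in>F. c s * s)"
    unfolding ideal_gen_def by blast
  then have "r * x = (\<Sum>s\<in>F. (r * c s) * s)"
    by (simp add: sum_distrib_left mult.assoc)
  then show ?thesis
    using F unfolding ideal_gen_def by (intro CollectI exI[of _ F] exI[of _ "\<lambda>s. r * c s"]) simp
qed

lemma ideal_gen_minimal:
  assumes "S \<subseteq> A" "0 \<in> A" "\<And>x y. x \<in> A \<Longrightarrow> y \<in> A \<Longrightarrow> x + y \<in> A"
    and "\<And>r x. x \<in> A \<Longrightarrow> r * x \<in> A"
  shows "ideal_gen S \<subseteq> A"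
proof
  fix x assume "x \<in> ideal_gen S"
  then obtain F c where F: "finite F" "F \<subseteq> S" "x = (\<Sum>s\<in>F. c s * s)"
    unfolding ideal_gen_def by blast
  have "(\<Sum>s\<in>F. c s * s) \<in> A"
    using F(1,2) by (induction F rule: finite_induct) (use assms in auto)
  then show "x \<in> A"
    using F(3) by simp
qed

lemma ideal_pow_zero: "0 \<in> ideal_pow I k"
  by (cases k) (auto simp: ideal_prod_def ideal_gen_zero)

lemma ideal_pow_add: "x \<in> ideal_pow I k \<Longrightarrow> y \<in> ideal_pow I k \<Longrightarrow> x + y \<in> ideal_pow I k"
  by (cases k) (auto simp: ideal_prod_def ideal_gen_add)

lemma ideal_pow_mult_left: "x \<in> ideal_pow I k \<Longrightarrow> r * x \<in> ideal_pow I k"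
  by (cases k) (auto simp: ideal_prod_def ideal_gen_mult_left)

lemma ideal_pow_sum:
  "(\<And>s. s \<in> F \<Longrightarrow> f s \<in> ideal_pow I k) \<Longrightarrow> sum f F \<in> ideal_pow I k"
  by (induction F rule: infinite_finite_induct) (auto intro: ideal_pow_add ideal_pow_zero)

lemma ideal_pow_Suc_mult_mem: "x \<in> I \<Longrightarrow> y \<in> ideal_pow I k \<Longrightarrow> x * y \<in> ideal_pow I (Suc k)"
  unfolding ideal_pow.simps ideal_prod_def by (rule ideal_gen_base) blast

lemma integral_over_idealI_power:
  assumes "m \<ge> 1" "x ^ m \<in> ideal_pow I m"
  shows "integral_over_ideal I x"
proof -
  define a where "a i = (if i = m then - (x ^ m) else 0)" for i
  have "\<forall>i\<in>{1..m}. a i \<in> ideal_pow I i"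
    using ideal_pow_mult_left[OF assms(2), of "-1"] by (simp add: a_def ideal_pow_zero)
  moreover have "(\<Sum>i=1..m. a i * x ^ (m - i)) = (\<Sum>i=1..m. if i = m then - (x ^ m) else 0)"
    by (rule sum.cong) (auto simp: a_def)
  then have "x ^ m + (\<Sum>i=1..m. a i * x ^ (m - i)) = 0"
    using assms(1) by simp
  ultimately show ?thesis
    unfolding integral_over_ideal_def using assms(1) by blast
qed

lemma subset_integral_closure_ideal: "I \<subseteq> integral_closure_ideal I"
proof
  fix x assume "x \<in> I"
  then have "x ^ 1 \<in> ideal_pow I 1"
    using ideal_pow_Suc_mult_mem[of x I 1 0] by simp
  then show "x \<in> integral_closure_ideal I"
    unfolding integral_closure_ideal_def by (auto intro: integral_over_idealI_power)
qed

section \<open>Weights and lowest terms\<close>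

lemma sum_single_lookup_keys:
  "(\<Sum>a\<in>Poly_Mapping.keys p. Poly_Mapping.single a (Poly_Mapping.lookup p a)) = p"
proof (rule poly_mapping_eqI)
  fix k
  have "(\<Sum>a\<in>Poly_Mapping.keys p. Poly_Mapping.lookup (Poly_Mapping.single a (Poly_Mapping.lookup p a)) k)
      = (\<Sum>a\<in>Poly_Mapping.keys p. if a = k then Poly_Mapping.lookup p a else 0)"
    by (rule sum.cong) (auto simp: lookup_single when_def)
  then show "Poly_Mapping.lookup (\<Sum>a\<in>Poly_Mapping.keys p. Poly_Mapping.single a (Poly_Mapping.lookup p a)) k
      = Poly_Mapping.lookup p k"
    by (simp add: lookup_sum in_keys_iff)
qed

lemma single_one_power:
  "Poly_Mapping.single a (1::'b::comm_semiring_1) ^ m = Poly_Mapping.single (\<Sum>_<m. a) 1"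
  by (induction m) (simp_all add: mult_single add.commute)

lemma var_power: "var i ^ e = Poly_Mapping.single (Poly_Mapping.single i e) 1"
proof -
  have "(\<Sum>_<e. Poly_Mapping.single i 1) = Poly_Mapping.single i e"
    by (rule poly_mapping_eqI) (simp add: lookup_sum lookup_single when_def)
  then show ?thesis
    unfolding var_def single_one_power by simp
qed

definition weight :: "('n::finite \<Rightarrow> nat) \<Rightarrow> ('n \<Rightarrow>\<^sub>0 nat) \<Rightarrow> nat" where
  "weight w a = (\<Sum>i\<in>UNIV. Poly_Mapping.lookup a i * w i)"

lemma weight_zero [simp]: "weight w 0 = 0"
  by (simp add: weight_def)

lemma weight_add: "weight w (a + b) = weight w a + weight w b"
  by (simp add: weight_def lookup_add sum.distrib add_mult_distrib)

lemma weight_sum: "weight w (sum f A) = (\<Sum>x\<in>A. weight w (f x))"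
  by (induction A rule: infinite_finite_induct) (simp_all add: weight_add)

lemma weight_single: "weight w (Poly_Mapping.single i c) = c * w i"
proof -
  have "weight w (Poly_Mapping.single i c) = (\<Sum>j\<in>UNIV. if j = i then c * w j else 0)"
    unfolding weight_def by (rule sum.cong) (auto simp: lookup_single when_def)
  then show ?thesis
    by simp
qed

lemma lookup_mult_keys:
  fixes p q :: "'m::comm_monoid_add \<Rightarrow>\<^sub>0 'k::comm_semiring_1"
  shows "Poly_Mapping.lookup (p * q) c = (\<Sum>a\<in>Poly_Mapping.keys p. \<Sum>b\<in>Poly_Mapping.keys q.
           if c = a + b then Poly_Mapping.lookup p a * Poly_Mapping.lookup q b else 0)"
proof -
  have "p * q = (\<Sum>a\<in>Poly_Mapping.keys p. Poly_Mapping.single a (Poly_Mapping.lookup p a))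
              * (\<Sum>b\<in>Poly_Mapping.keys q. Poly_Mapping.single b (Poly_Mapping.lookup q b))"
    by (simp add: sum_single_lookup_keys)
  also have "\<dots> = (\<Sum>a\<in>Poly_Mapping.keys p. \<Sum>b\<in>Poly_Mapping.keys q.
                     Poly_Mapping.single (a + b) (Poly_Mapping.lookup p a * Poly_Mapping.lookup q b))"
    by (simp add: sum_product mult_single)
  finally show ?thesis
    by (simp add: lookup_sum lookup_single when_def eq_commute)
qed

lemma lookup_mult_minimal:
  fixes \<phi> :: "'m::cancel_comm_monoid_add \<Rightarrow> 'o::{ordered_cancel_comm_monoid_add, linorder}"
    and p q :: "'m \<Rightarrow>\<^sub>0 'k::comm_semiring_1"
  assumes inj: "inj \<phi>" and add: "\<And>x y. \<phi> (x + y) = \<phi> x + \<phi> y"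
    and p_ge: "\<forall>a\<in>Poly_Mapping.keys p. \<phi> a\<^sub>0 \<le> \<phi> a"
    and q_ge: "\<forall>b\<in>Poly_Mapping.keys q. \<phi> b\<^sub>0 \<le> \<phi> b"
  shows "Poly_Mapping.lookup (p * q) (a\<^sub>0 + b\<^sub>0) = Poly_Mapping.lookup p a\<^sub>0 * Poly_Mapping.lookup q b\<^sub>0"
    and "\<forall>c\<in>Poly_Mapping.keys (p * q). \<phi> (a\<^sub>0 + b\<^sub>0) \<le> \<phi> c"
proof -
  have unique: "a = a\<^sub>0 \<and> b = b\<^sub>0"
    if "a \<in> Poly_Mapping.keys p" "b \<in> Poly_Mapping.keys q" "a\<^sub>0 + b\<^sub>0 = a + b" for a b
  proof -
    have ge: "\<phi> a\<^sub>0 \<le> \<phi> a" "\<phi> b\<^sub>0 \<le> \<phi> b"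
      using p_ge q_ge that by auto
    have eq: "\<phi> a\<^sub>0 + \<phi> b\<^sub>0 = \<phi> a + \<phi> b"
      using that(3) add by metis
    have "\<not> \<phi> a\<^sub>0 < \<phi> a"
      using add_less_le_mono[OF _ ge(2), of "\<phi> a\<^sub>0" "\<phi> a"] eq by auto
    then have "a = a\<^sub>0"
      using ge(1) inj by (auto simp: inj_eq)
    then show ?thesis
      using that(3) by simp
  qed
  have "Poly_Mapping.lookup (p * q) (a\<^sub>0 + b\<^sub>0) = (\<Sum>a\<in>Poly_Mapping.keys p. \<Sum>b\<in>Poly_Mapping.keys q.
          if a = a\<^sub>0 \<and> b = b\<^sub>0 then Poly_Mapping.lookup p a * Poly_Mapping.lookup q b else 0)"
    unfolding lookup_mult_keys by (intro sum.cong refl) (metis unique)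
  also have "\<dots> = (\<Sum>a\<in>Poly_Mapping.keys p. if a = a\<^sub>0 then \<Sum>b\<in>Poly_Mapping.keys q.
          if b = b\<^sub>0 then Poly_Mapping.lookup p a\<^sub>0 * Poly_Mapping.lookup q b else 0 else 0)"
    by (intro sum.cong refl) simp
  also have "\<dots> = Poly_Mapping.lookup p a\<^sub>0 * Poly_Mapping.lookup q b\<^sub>0"
    by (simp add: sum.delta' in_keys_iff)
  finally show "Poly_Mapping.lookup (p * q) (a\<^sub>0 + b\<^sub>0)
      = Poly_Mapping.lookup p a\<^sub>0 * Poly_Mapping.lookup q b\<^sub>0" .
  show "\<forall>c\<in>Poly_Mapping.keys (p * q). \<phi> (a\<^sub>0 + b\<^sub>0) \<le> \<phi> c"
  proof
    fix c assume "c \<in> Poly_Mapping.keys (p * q)"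
    then obtain a b where "a \<in> Poly_Mapping.keys p" "b \<in> Poly_Mapping.keys q" "c = a + b"
      using keys_mult by blast
    then show "\<phi> (a\<^sub>0 + b\<^sub>0) \<le> \<phi> c"
      using p_ge q_ge add by (simp add: add_mono)
  qed
qed

lemma lookup_power_minimal:
  fixes \<phi> :: "'m::cancel_comm_monoid_add \<Rightarrow> 'o::{ordered_cancel_comm_monoid_add, linorder}"
    and p :: "'m \<Rightarrow>\<^sub>0 'k::comm_semiring_1"
  assumes inj: "inj \<phi>" and add: "\<And>x y. \<phi> (x + y) = \<phi> x + \<phi> y"
    and p_ge: "\<forall>a\<in>Poly_Mapping.keys p. \<phi> a\<^sub>0 \<le> \<phi> a"
  shows "Poly_Mapping.lookup (p ^ m) (\<Sum>_<m. a\<^sub>0) = Poly_Mapping.lookup p a\<^sub>0 ^ m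
    \<and> (\<forall>c\<in>Poly_Mapping.keys (p ^ m). \<phi> (\<Sum>_<m. a\<^sub>0) \<le> \<phi> c)"
proof (induction m)
  case 0
  show ?case
    by (simp add: lookup_one)
next
  case (Suc m)
  then show ?case
    using lookup_mult_minimal[OF inj add p_ge, of "p ^ m" "\<Sum>_<m. a\<^sub>0"] by (simp add: add.commute)
qed

text \<open>A monomial order refining the weight: the weight followed by the exponent vector,
  listed along an injection \<open>h\<close> of the variables into \<open>nat\<close>, compared lexicographically.\<close>

definition weight_embedding ::
    "('n::finite \<Rightarrow> nat) \<Rightarrow> ('n \<Rightarrow> nat) \<Rightarrow> ('n \<Rightarrow>\<^sub>0 nat) \<Rightarrow> (nat \<Rightarrow>\<^sub>0 nat)" where
  "weight_embedding w h a = Poly_Mapping.single 0 (weight w a)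
     + (\<Sum>i\<in>UNIV. Poly_Mapping.single (Suc (h i)) (Poly_Mapping.lookup a i))"

lemma lookup_weight_embedding_0: "Poly_Mapping.lookup (weight_embedding w h a) 0 = weight w a"
  by (simp add: weight_embedding_def lookup_add lookup_sum lookup_single)

lemma lookup_weight_embedding_Suc:
  assumes "inj h"
  shows "Poly_Mapping.lookup (weight_embedding w h a) (Suc (h i)) = Poly_Mapping.lookup a i"
proof -
  have "(\<Sum>j\<in>UNIV. Poly_Mapping.lookup
          (Poly_Mapping.single (Suc (h j)) (Poly_Mapping.lookup a j)) (Suc (h i)))
      = (\<Sum>j\<in>UNIV. if j = i then Poly_Mapping.lookup a j else 0)"
    by (rule sum.cong) (use assms in \<open>auto simp: lookup_single inj_eq\<close>)
  then show ?thesis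
    by (simp add: weight_embedding_def lookup_add lookup_sum lookup_single)
qed

lemma weight_embedding_add:
  "weight_embedding w h (a + b) = weight_embedding w h a + weight_embedding w h b"
  by (simp add: weight_embedding_def weight_add lookup_add single_add sum.distrib ac_simps)

lemma inj_weight_embedding: "inj h \<Longrightarrow> inj (weight_embedding w h)"
  by (rule injI, rule poly_mapping_eqI) (metis lookup_weight_embedding_Suc)

lemma weight_embedding_le_imp_weight_le:
  assumes "weight_embedding w h a \<le> weight_embedding w h b"
  shows "weight w a \<le> weight w b"
proof (rule ccontr)
  assume "\<not> weight w a \<le> weight w b"
  then have "less_fun (Poly_Mapping.lookup (weight_embedding w h b)) (Poly_Mapping.lookup (weight_embedding w h a))"
    unfolding less_fun_def by (intro exI[of _ 0]) (simp add: lookup_weight_embedding_0)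
  then show False
    using assms by (simp add: less_poly_mapping.rep_eq[symmetric])
qed

lemma obtain_lowest_weight_key:
  fixes x :: "('n::finite, 'k::{comm_semiring_1, semiring_1_no_zero_divisors}) mpoly"
  assumes "x \<noteq> 0"
  obtains a where "a \<in> Poly_Mapping.keys x" "\<forall>b\<in>Poly_Mapping.keys x. weight w a \<le> weight w b"
    and "\<And>m. (\<Sum>_<m. a) \<in> Poly_Mapping.keys (x ^ m)"
proof -
  obtain h :: "'n \<Rightarrow> nat" where h: "inj h"
    using finite_imp_inj_to_nat_seg[of "UNIV :: 'n set"] by auto
  let ?\<phi> = "weight_embedding w h"
  have keys: "finite (?\<phi> ` Poly_Mapping.keys x)" "?\<phi> ` Poly_Mapping.keys x \<noteq> {}"
    using assms by auto
  obtain a where a: "a \<in> Poly_Mapping.keys x" "?\<phi> a = Min (?\<phi> ` Poly_Mapping.keys x)"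
    using Min_in[OF keys] by auto
  have a_min: "\<forall>b\<in>Poly_Mapping.keys x. ?\<phi> a \<le> ?\<phi> b"
    using a(2) keys(1) by simp
  have "(\<Sum>_<m. a) \<in> Poly_Mapping.keys (x ^ m)" for m
    using lookup_power_minimal[OF inj_weight_embedding[OF h] weight_embedding_add a_min, of m] a(1)
    by (simp add: in_keys_iff)
  moreover have "\<forall>b\<in>Poly_Mapping.keys x. weight w a \<le> weight w b"
    using a_min weight_embedding_le_imp_weight_le by blast
  ultimately show ?thesis
    using a(1) that by blast
qed

section \<open>Weight ideals\<close>

definition weight_ideal :: "('n::finite \<Rightarrow> nat) \<Rightarrow> nat \<Rightarrow> ('n, 'k::comm_ring_1) mpoly set" where
  "weight_ideal w t = {f. \<forall>a\<in>Poly_Mapping.keys f. t \<le> weight w a}"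

lemma weight_ideal_0 [simp]: "weight_ideal w 0 = UNIV"
  by (simp add: weight_ideal_def)

lemma weight_ideal_antimono: "s \<le> t \<Longrightarrow> weight_ideal w t \<subseteq> weight_ideal w s"
  unfolding weight_ideal_def by auto

lemma zero_in_weight_ideal: "0 \<in> weight_ideal w t"
  by (simp add: weight_ideal_def)

lemma weight_ideal_add:
  assumes "f \<in> weight_ideal w t" "g \<in> weight_ideal w t"
  shows "f + g \<in> weight_ideal w t"
  unfolding weight_ideal_def mem_Collect_eq
proof
  fix a assume "a \<in> Poly_Mapping.keys (f + g)"
  then have "a \<in> Poly_Mapping.keys f \<union> Poly_Mapping.keys g"
    by (rule subsetD[OF keys_add])
  then show "t \<le> weight w a"
    using assms unfolding weight_ideal_def by auto
qed

lemma weight_ideal_uminus: "f \<in> weight_ideal w t \<Longrightarrow> - f \<in> weight_ideal w t"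
  unfolding weight_ideal_def by (simp add: keys_minus)

lemma weight_ideal_mult:
  assumes "f \<in> weight_ideal w s" "g \<in> weight_ideal w t"
  shows "f * g \<in> weight_ideal w (s + t)"
  unfolding weight_ideal_def mem_Collect_eq
proof
  fix c assume "c \<in> Poly_Mapping.keys (f * g)"
  then obtain a b where "a \<in> Poly_Mapping.keys f" "b \<in> Poly_Mapping.keys g" "c = a + b"
    using keys_mult by blast
  then show "s + t \<le> weight w c"
    using assms unfolding weight_ideal_def by (auto simp: weight_add intro: add_mono)
qed

lemma weight_ideal_mult_left: "g \<in> weight_ideal w t \<Longrightarrow> r * g \<in> weight_ideal w t"
  using weight_ideal_mult[of r w 0 g t] by simp

lemma weight_ideal_power: "f \<in> weight_ideal w s \<Longrightarrow> f ^ j \<in> weight_ideal w (j * s)"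
  by (induction j) (simp_all add: weight_ideal_mult)

lemma weight_ideal_sum:
  "(\<And>s. s \<in> F \<Longrightarrow> g s \<in> weight_ideal w t) \<Longrightarrow> sum g F \<in> weight_ideal w t"
  by (induction F rule: infinite_finite_induct) (auto intro: weight_ideal_add zero_in_weight_ideal)

lemma ideal_gen_subset_weight_ideal: "S \<subseteq> weight_ideal w t \<Longrightarrow> ideal_gen S \<subseteq> weight_ideal w t"
  by (rule ideal_gen_minimal[OF _ zero_in_weight_ideal weight_ideal_add weight_ideal_mult_left])

lemma ideal_pow_subset_weight_ideal:
  "X \<subseteq> weight_ideal w t \<Longrightarrow> ideal_pow X k \<subseteq> weight_ideal w (k * t)"
proof (induction k)
  case (Suc k)
  have "{a * b |a b. a \<in> X \<and> b \<in> ideal_pow X k} \<subseteq> weight_ideal w (t + k * t)"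
    using Suc by (auto intro: weight_ideal_mult)
  then show ?case
    unfolding ideal_pow.simps ideal_prod_def by (simp add: ideal_gen_subset_weight_ideal)
qed simp

lemma ideal_pow_times_power_mem_weight_ideal:
  assumes X: "X \<subseteq> weight_ideal w t" and c: "c \<in> ideal_pow X i" and x: "x \<in> weight_ideal w v"
    and "v < t" "1 \<le> i" "i \<le> m"
  shows "c * x ^ (m - i) \<in> weight_ideal w (m * v + 1)"
proof -
  have "c * x ^ (m - i) \<in> weight_ideal w (i * t + (m - i) * v)"
    using c ideal_pow_subset_weight_ideal[OF X, of i] weight_ideal_power[OF x]
    by (blast intro: weight_ideal_mult)
  moreover have "i * v + i \<le> i * t"
    using mult_le_mono2[of "v + 1" t i] \<open>v < t\<close> by simp
  moreover have "m * v = i * v + (m - i) * v"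
    using \<open>i \<le> m\<close> by (simp add: add_mult_distrib[symmetric])
  ultimately show ?thesis
    using weight_ideal_antimono[of "m * v + 1" "i * t + (m - i) * v" w] \<open>1 \<le> i\<close> by auto
qed

text \<open>If \<open>x\<close> had a key of weight \<open>v < t\<close>, the lowest
  key of \<open>x\<close> would give \<open>x\<^sup>m\<close> a key of weight \<open>m v\<close>, while every other term of the
  equation of integral dependence lies in \<open>weight_ideal w (m v + 1)\<close>.\<close>

lemma integral_closure_ideal_subset_weight_ideal:
  fixes X :: "('n::finite, 'k::idom) mpoly set"
  assumes X: "X \<subseteq> weight_ideal w t"
  shows "integral_closure_ideal X \<subseteq> weight_ideal w t"
proof
  fix x assume "x \<in> integral_closure_ideal X"
  then obtain m c where m: "m \<ge> 1" and c: "\<forall>i\<in>{1..m}. c i \<in> ideal_pow X i"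
    and eq: "x ^ m + (\<Sum>i=1..m. c i * x ^ (m - i)) = 0"
    unfolding integral_closure_ideal_def integral_over_ideal_def by blast
  show "x \<in> weight_ideal w t"
  proof (rule ccontr)
    assume x: "x \<notin> weight_ideal w t"
    then obtain a where a: "a \<in> Poly_Mapping.keys x" "\<forall>b\<in>Poly_Mapping.keys x. weight w a \<le> weight w b"
      and power_key: "(\<Sum>_<m. a) \<in> Poly_Mapping.keys (x ^ m)"
      using obtain_lowest_weight_key[of x w] zero_in_weight_ideal by metis
    define v where "v = weight w a"
    have "v < t"
      using x a(2) unfolding weight_ideal_def v_def by force
    have x_v: "x \<in> weight_ideal w v"
      using a(2) unfolding weight_ideal_def v_def by blast
    have "c i * x ^ (m - i) \<in> weight_ideal w (m * v + 1)" if "i \<in> {1..m}" for i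
      using that c X x_v \<open>v < t\<close> by (intro ideal_pow_times_power_mem_weight_ideal) auto
    then have "- (\<Sum>i=1..m. c i * x ^ (m - i)) \<in> weight_ideal w (m * v + 1)"
      by (intro weight_ideal_uminus weight_ideal_sum)
    moreover have "x ^ m = - (\<Sum>i=1..m. c i * x ^ (m - i))"
      using eq by (simp add: eq_neg_iff_add_eq_0)
    moreover have "weight w (\<Sum>_<m. a) = m * v"
      by (simp add: weight_sum v_def)
    ultimately show False
      using power_key unfolding weight_ideal_def by fastforce
  qed
qed

section \<open>Comparing \<open>I(\<lambda>)\<^sup>k\<close> with weight ideals\<close>

lemma I_lambda_subset_weight_ideal:
  assumes "\<And>i. lam i * w i = T"
  shows "I_lambda lam \<subseteq> (weight_ideal w T :: ('n::finite, 'k::field) mpoly set)"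
proof -
  have "range (\<lambda>i. var i ^ lam i) \<subseteq> (weight_ideal w T :: ('n, 'k) mpoly set)"
    using assms by (auto simp: var_power weight_ideal_def weight_single)
  then show ?thesis
    unfolding I_lambda_def
    by (intro integral_closure_ideal_subset_weight_ideal ideal_gen_subset_weight_ideal)
qed

lemma monomial_mem_ideal_pow_var_powers:
  fixes lam :: "'n::finite \<Rightarrow> nat"
  assumes "\<And>i. lam i * q i \<le> Poly_Mapping.lookup e i" and "m \<le> sum q UNIV"
  shows "(Poly_Mapping.single e 1 :: ('n, 'k::comm_ring_1) mpoly)
           \<in> ideal_pow (ideal_gen (range (\<lambda>i. var i ^ lam i))) m"
  using assms
proof (induction m arbitrary: e q)
  case (Suc m)
  let ?J = "ideal_gen (range (\<lambda>i. var i ^ lam i)) :: ('n, 'k) mpoly set"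
  have "sum q UNIV \<noteq> 0"
    using Suc.prems(2) by linarith
  then obtain j where j: "q j \<noteq> 0"
    by (metis sum.neutral)
  define q' where "q' = q(j := q j - 1)"
  define e' where "e' = e - Poly_Mapping.single j (lam j)"
  have "sum q UNIV = q j + sum q (UNIV - {j})"
    by (rule sum.remove) simp_all
  moreover have "sum q' UNIV = q' j + sum q' (UNIV - {j})"
    by (rule sum.remove) simp_all
  moreover have "sum q' (UNIV - {j}) = sum q (UNIV - {j})"
    unfolding q'_def by (rule sum.cong) auto
  ultimately have "m \<le> sum q' UNIV"
    using Suc.prems(2) j unfolding q'_def by simp
  moreover have "lam i * q' i \<le> Poly_Mapping.lookup e' i" for i
    using Suc.prems(1)[of i]
    by (simp add: q'_def e'_def lookup_minus lookup_single when_def diff_mult_distrib2 diff_le_mono)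
  ultimately have "Poly_Mapping.single e' 1 \<in> ideal_pow ?J m"
    using Suc.IH by blast
  moreover have "var j ^ lam j \<in> ?J"
    by (rule ideal_gen_base) simp
  moreover have "lam j \<le> Poly_Mapping.lookup e j"
    using j order_trans[OF _ Suc.prems(1)[of j]] by simp
  then have "e = Poly_Mapping.single j (lam j) + e'"
    by (intro poly_mapping_eqI) (auto simp: e'_def lookup_add lookup_minus lookup_single when_def)
  then have "Poly_Mapping.single e 1 = var j ^ lam j * (Poly_Mapping.single e' 1 :: ('n, 'k) mpoly)"
    by (simp add: var_power mult_single)
  ultimately show ?case
    by (metis ideal_pow_Suc_mult_mem)
qed simp

text \<open>\<open>(x\<^sup>b)\<^sup>T = x\<^bsup>T b\<^esup>\<close> is divisible by the product of \<open>w\<^sub>i b\<^sub>i\<close> copies of each \<open>x\<^sub>i\<^bsup>\<lambda>\<^sub>i\<^esup>\<close>,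
  and there are \<open>weight w b \<ge> T\<close> factors.\<close>

lemma monomial_mem_I_lambda:
  assumes lam_w: "\<And>i. lam i * w i = T" and "T \<ge> 1" and "T \<le> weight w b"
  shows "(Poly_Mapping.single b 1 :: ('n::finite, 'k::field) mpoly) \<in> I_lambda lam"
proof -
  define q where "q i = w i * Poly_Mapping.lookup b i" for i
  have "T \<le> sum q UNIV"
    using assms(3) by (simp add: q_def weight_def mult.commute)
  moreover have "lam i * q i \<le> Poly_Mapping.lookup (\<Sum>_<T. b) i" for i
    by (simp add: q_def lookup_sum mult.assoc[symmetric] lam_w)
  ultimately have "(Poly_Mapping.single b 1 :: ('n, 'k) mpoly) ^ T
                     \<in> ideal_pow (ideal_gen (range (\<lambda>i. var i ^ lam i))) T"
    unfolding single_one_power by (rule monomial_mem_ideal_pow_var_powers[rotated])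
  then show ?thesis
    unfolding I_lambda_def integral_closure_ideal_def
    using integral_over_idealI_power[OF \<open>T \<ge> 1\<close>] by blast
qed

definition weight_splits :: "('n::finite \<Rightarrow> nat) \<Rightarrow> nat \<Rightarrow> bool" where
  "weight_splits w T \<longleftrightarrow> (\<forall>a. 2 * T \<le> weight w a \<longrightarrow> (\<exists>b r. a = b + r \<and> weight w b = T))"

lemma monomial_mem_ideal_pow_I_lambda:
  assumes lam_w: "\<And>i. lam i * w i = T" and T: "T \<ge> 1" and splits: "weight_splits w T"
  shows "k \<ge> 1 \<Longrightarrow> k * T \<le> weight w a
    \<Longrightarrow> (Poly_Mapping.single a 1 :: ('n::finite, 'k::field) mpoly) \<in> ideal_pow (I_lambda lam) k"
proof (induction k arbitrary: a)
  case (Suc k)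
  show ?case
  proof (cases "k = 0")
    case True
    then have "Poly_Mapping.single a 1 * 1 \<in> ideal_pow (I_lambda lam) (Suc k)"
      using Suc.prems monomial_mem_I_lambda[OF lam_w T] by (intro ideal_pow_Suc_mult_mem) simp_all
    then show ?thesis
      by simp
  next
    case False
    then have "2 * T \<le> weight w a"
      using Suc.prems(2) mult_le_mono1[of 2 "Suc k" T] by linarith
    then obtain b r where a: "a = b + r" and b: "weight w b = T"
      using splits unfolding weight_splits_def by blast
    have "k * T \<le> weight w r"
      using Suc.prems(2) by (simp add: a b weight_add)
    then have "(Poly_Mapping.single r 1 :: ('n, 'k) mpoly) \<in> ideal_pow (I_lambda lam) k"
      using Suc.IH False by simp
    moreover have "(Poly_Mapping.single b 1 :: ('n, 'k) mpoly) \<in> I_lambda lam"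
      using b by (intro monomial_mem_I_lambda[OF lam_w T]) simp
    ultimately show ?thesis
      using ideal_pow_Suc_mult_mem by (fastforce simp: a mult_single)
  qed
qed simp

lemma weight_ideal_subset_ideal_pow_I_lambda:
  assumes "\<And>i. lam i * w i = T" "T \<ge> 1" "weight_splits w T" "k \<ge> 1"
  shows "weight_ideal w (k * T) \<subseteq> (ideal_pow (I_lambda lam) k :: ('n::finite, 'k::field) mpoly set)"
proof
  fix f :: "('n, 'k) mpoly"
  assume f: "f \<in> weight_ideal w (k * T)"
  have "f = (\<Sum>a\<in>Poly_Mapping.keys f.
              Poly_Mapping.single 0 (Poly_Mapping.lookup f a) * Poly_Mapping.single a 1)"
    by (simp add: mult_single sum_single_lookup_keys)
  also have "\<dots> \<in> ideal_pow (I_lambda lam) k"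
    using f monomial_mem_ideal_pow_I_lambda[OF assms] unfolding weight_ideal_def
    by (intro ideal_pow_sum ideal_pow_mult_left) blast
  finally show "f \<in> ideal_pow (I_lambda lam) k" .
qed

lemma normal_ideal_I_lambdaI:
  assumes lam_w: "\<And>i. lam i * w i = T" and "T \<ge> 1" and "weight_splits w T"
  shows "normal_ideal (I_lambda lam :: ('n::finite, 'k::field) mpoly set)"
  unfolding normal_ideal_def
proof (intro allI impI subset_antisym)
  fix k :: nat
  assume "k \<ge> 1"
  let ?Ik = "ideal_pow (I_lambda lam) k :: ('n, 'k) mpoly set"
  have "integral_closure_ideal ?Ik \<subseteq> weight_ideal w (k * T)"
    using I_lambda_subset_weight_ideal[OF lam_w]
    by (intro integral_closure_ideal_subset_weight_ideal ideal_pow_subset_weight_ideal)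
  also have "\<dots> \<subseteq> ?Ik"
    using assms \<open>k \<ge> 1\<close> by (rule weight_ideal_subset_ideal_pow_I_lambda)
  finally show "integral_closure_ideal ?Ik \<subseteq> ?Ik" .
  show "?Ik \<subseteq> integral_closure_ideal ?Ik"
    by (rule subset_integral_closure_ideal)
qed

section \<open>Splitting monomials\<close>

lemma exists_le_sum_eq:
  fixes s :: "'a \<Rightarrow> nat"
  assumes "finite A" "d \<le> sum s A"
  shows "\<exists>c. (\<forall>i. c i \<le> s i) \<and> sum c A = d"
  using assms
proof (induction A arbitrary: d rule: finite_induct)
  case empty
  then show ?case
    by (intro exI[of _ "\<lambda>_. 0"]) simp
next
  case (insert x A)
  show ?case
  proof (cases "d \<le> sum s A")
    case True
    then obtain c where c: "\<forall>i. c i \<le> s i" "sum c A = d"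
      using insert.IH by blast
    have "sum (c(x := 0)) A = sum c A"
      using insert.hyps by (intro sum.cong) auto
    then show ?thesis
      using insert.hyps c by (intro exI[of _ "c(x := 0)"]) simp
  next
    case False
    have "sum (s(x := d - sum s A)) A = sum s A"
      using insert.hyps by (intro sum.cong) auto
    then show ?thesis
      using insert False by (intro exI[of _ "s(x := d - sum s A)"]) simp
  qed
qed

text \<open>This is where \<open>gcd(\<lambda>) > n - 2\<close> enters: with \<open>\<lambda>\<^sub>i = d \<mu>\<^sub>i\<close> and \<open>w\<^sub>i \<mu>\<^sub>i = M\<close>, a monomial
  of weight at least \<open>2 d M\<close> contains at least \<open>d\<close> blocks \<open>x\<^sub>i\<^bsup>\<mu>\<^sub>i\<^esup>\<close>, each of weight \<open>M\<close>,
  because the remainders modulo \<open>\<mu>\<^sub>i\<close> contribute less than \<open>n M \<le> (d + 1) M\<close>.\<close>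

lemma weight_ge_imp_sum_div_ge:
  fixes w \<mu> :: "'n::finite \<Rightarrow> nat"
  assumes \<mu>: "\<And>i. \<mu> i > 0" and w\<mu>: "\<And>i. w i * \<mu> i = M" and "M > 0"
    and card: "CARD('n) \<le> d + 1" and big: "2 * (d * M) \<le> weight w a"
  shows "d \<le> (\<Sum>i\<in>UNIV. Poly_Mapping.lookup a i div \<mu> i)"
proof -
  define s where "s i = Poly_Mapping.lookup a i div \<mu> i" for i
  have remainder: "Poly_Mapping.lookup a i * w i + 1 \<le> (s i + 1) * M" for i
  proof -
    have "Poly_Mapping.lookup a i < (s i + 1) * \<mu> i"
      unfolding s_def using \<mu>[of i] by (simp add: dividend_less_div_times)
    then have "Poly_Mapping.lookup a i * w i < (s i + 1) * \<mu> i * w i"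
      using \<open>M > 0\<close> w\<mu>[of i] by (intro mult_strict_right_mono) (auto intro!: gr0I)
    also have "\<dots> = (s i + 1) * M"
      using w\<mu>[of i] by (metis mult.assoc mult.commute)
    finally show ?thesis
      by simp
  qed
  have "weight w a + CARD('n) = (\<Sum>i\<in>UNIV. Poly_Mapping.lookup a i * w i + 1)"
    unfolding weight_def sum.distrib by simp
  also have "\<dots> \<le> (\<Sum>i\<in>UNIV. (s i + 1) * M)"
    by (rule sum_mono) (rule remainder)
  also have "\<dots> = (sum s UNIV + CARD('n)) * M"
    by (simp add: sum_distrib_right sum_distrib_left sum.distrib algebra_simps)
  finally have bound: "weight w a + CARD('n) \<le> (sum s UNIV + CARD('n)) * M" .
  show ?thesis
    unfolding s_def[symmetric]
  proof (rule ccontr)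
    assume "\<not> d \<le> sum s UNIV"
    then have "(sum s UNIV + CARD('n)) * M \<le> 2 * (d * M)"
      using card mult_le_mono1[of "sum s UNIV + CARD('n)" "2 * d" M] by (simp add: mult.assoc)
    then show False
      using bound big zero_less_card_finite[where 'a='n] by linarith
  qed
qed

lemma weight_splitsI:
  fixes w \<mu> :: "'n::finite \<Rightarrow> nat"
  assumes \<mu>: "\<And>i. \<mu> i > 0" and w\<mu>: "\<And>i. w i * \<mu> i = M" and "M > 0"
    and card: "CARD('n) \<le> d + 1"
  shows "weight_splits w (d * M)"
  unfolding weight_splits_def
proof (intro allI impI)
  fix a :: "'n \<Rightarrow>\<^sub>0 nat"
  assume "2 * (d * M) \<le> weight w a"
  then have "d \<le> (\<Sum>i\<in>UNIV. Poly_Mapping.lookup a i div \<mu> i)"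
    using assms by (intro weight_ge_imp_sum_div_ge)
  then obtain c where c: "\<forall>i. c i \<le> Poly_Mapping.lookup a i div \<mu> i" "sum c UNIV = d"
    using exists_le_sum_eq[of UNIV d "\<lambda>i. Poly_Mapping.lookup a i div \<mu> i"] by auto
  define b where "b = Abs_poly_mapping (\<lambda>i. c i * \<mu> i)"
  have lookup_b: "Poly_Mapping.lookup b i = c i * \<mu> i" for i
    by (simp add: b_def)
  have "c i * \<mu> i \<le> Poly_Mapping.lookup a i" for i
    using c(1) mult_le_mono1 div_times_less_eq_dividend order_trans by metis
  then have "a = b + (a - b)"
    by (intro poly_mapping_eqI) (simp add: lookup_add lookup_minus lookup_b)
  moreover have "weight w b = (\<Sum>i\<in>UNIV. c i * (w i * \<mu> i))"
    unfolding weight_def lookup_b by (simp add: ac_simps)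
  then have "weight w b = d * M"
    by (simp add: w\<mu> c(2) sum_distrib_right[symmetric])
  ultimately show "\<exists>b r. a = b + r \<and> weight w b = d * M"
    by blast
qed

lemma obtain_balancing_weights:
  fixes lam :: "'n::finite \<Rightarrow> nat"
  assumes "\<And>i. lam i > 0"
  obtains w \<mu> M where "\<And>i. \<mu> i > 0" "\<And>i. w i * \<mu> i = M" "M > 0"
    and "\<And>i. lam i * w i = Gcd (range lam) * M"
proof -
  define d where "d = Gcd (range lam)"
  define \<mu> where "\<mu> i = lam i div d" for i
  define M where "M = prod \<mu> UNIV"
  define w where "w i = M div \<mu> i" for i
  have lam_d\<mu>: "lam i = d * \<mu> i" for i
    unfolding \<mu>_def d_def by (simp add: Gcd_dvd)
  then have \<mu>_pos: "\<mu> i > 0" for i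
    using assms[of i] by (simp add: gr0I)
  have w\<mu>: "w i * \<mu> i = M" for i
    unfolding w_def M_def by (simp add: dvd_prodI)
  have "lam i * w i = d * M" for i
    using w\<mu>[of i] by (simp add: lam_d\<mu> ac_simps)
  moreover have "M > 0"
    using \<mu>_pos by (simp add: M_def)
  ultimately show ?thesis
    using that \<mu>_pos w\<mu> d_def by blast
qed

theorem corollary4p4:
  fixes lam :: "'n::finite \<Rightarrow> nat"
  assumes "CARD('n) \<ge> 3"
    and "\<forall>i. lam i > 0"
    and "Gcd (range lam) > CARD('n) - 2"
  shows "normal_ideal (I_lambda lam :: ('n, 'k::field) mpoly set)"
proof -
  obtain w \<mu> M where \<mu>: "\<And>i. \<mu> i > 0" and w\<mu>: "\<And>i. w i * \<mu> i = M" and "M > 0"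
    and lam_w: "\<And>i. lam i * w i = Gcd (range lam) * M"
    using obtain_balancing_weights assms(2) by metis
  have "CARD('n) \<le> Gcd (range lam) + 1"
    using assms(1,3) by linarith
  with \<mu> w\<mu> \<open>M > 0\<close> have "weight_splits w (Gcd (range lam) * M)"
    by (rule weight_splitsI)
  moreover have "Gcd (range lam) * M \<ge> 1"
    using assms(2,3) \<open>M > 0\<close> by simp
  ultimately show ?thesis
    using lam_w by (intro normal_ideal_I_lambdaI)
qed

end
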